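(* Let $n\ge 1$ and let $\mathbf{u}=[u(1),\dots,u(n)]$ and $\mathbf{v}=[v(1),\dots,v(n)]$ be permutations in $S_n$ (one-line notation), with inverse functions $u^{-1},v^{-1}$. Define virtual levels $\ell_1,\dots,\ell_n$ by the following procedure: first, for $i=1,\dots,n$ set $\ell_{u(i)}\leftarrow n+1-i$; then, for $i=n-1,n-2,\dots,1$ (in this order) set $\ell_{v(i)}\leftarrow \max\{\ell_{v(i+1)}+1,\ \ell_{v(i)}\}$. Define the rewriting cost $C(\mathbf{u}\to\mathbf{v})=\ell_{v(1)}-n$, where $\ell_{v(1)}$ is the value at the end of the procedure. Then $$C(\mathbf{u}\to \mathbf{v})=\max_{i\in \{1,\dots,n\}}\bigl(v^{-1}(i)-u^{-1}(i)\bigr).$$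
   Context: A state of $n$ cells is a permutation $\mathbf{u}=[u(1),\dots,u(n)]\in S_n$, meaning cell $u(1)$ has the highest charge level and $u(n)$ the lowest; cell $u(i)$ has rank $i$, so $u^{-1}(j)$ is the rank (position) of cell $j$. The procedure in the claim models changing the state from $\mathbf{u}$ to $\mathbf{v}$ by "minimal-push-up" operations. *)

theory Defs
  imports "HOL-Combinatorics.Permutations"
begin

fun vl_init :: "nat \<Rightarrow> (nat \<Rightarrow> nat) \<Rightarrow> nat \<Rightarrow> (nat \<Rightarrow> int)" where
  "vl_init n u 0 = (\<lambda>_. 0)"
| "vl_init n u (Suc k) = (vl_init n u k)(u (Suc k) := int n + 1 - int (Suc k))"

text \<open>Second phase: k steps done, i.e. i = n-1, n-2, ..., n-k processed.\<close>
fun vl_proc :: "nat \<Rightarrow> (nat \<Rightarrow> nat) \<Rightarrow> (nat \<Rightarrow> nat) \<Rightarrow> nat \<Rightarrow> (nat \<Rightarrow> int)" where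
  "vl_proc n u v 0 = vl_init n u n"
| "vl_proc n u v (Suc k) =
     (let l = vl_proc n u v k; i = n - Suc k
      in l(v i := max (l (v (i + 1)) + 1) (l (v i))))"

definition rewrite_cost :: "nat \<Rightarrow> (nat \<Rightarrow> nat) \<Rightarrow> (nat \<Rightarrow> nat) \<Rightarrow> int" where
  "rewrite_cost n u v = vl_proc n u v (n - 1) (v 1) - int n"

end

theory Submission
  imports Defs
begin

text \<open>After the first phase every cell sits at level n + 1 minus its rank in u. In the second
  phase the level of v(j) becomes max over m \<ge> j of (initial level of v(m)) + (m - j): each push
  lifts v(j) one above v(j+1). With initial levels n + 1 - u^-1(v(m)), the final level of v(1)
  is n + max over m of (m - u^-1(v(m))), and substituting m = v^-1(i) gives the claim.\<close>

lemma vl_init_rank: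
  assumes "u permutes {1..n}" "k \<le> n" "j \<in> {1..k}"
  shows "vl_init n u k (u j) = int n + 1 - int j"
  using assms(2,3)
proof (induction k)
  case (Suc k)
  show ?case
  proof (cases "j = Suc k")
    case False
    with Suc.prems have "j \<in> {1..k}" by auto
    moreover have "u j \<noteq> u (Suc k)"
      using False permutes_inj[OF assms(1)] by (meson injD)
    ultimately show ?thesis using Suc by simp
  qed simp
qed simp

lemma vl_init_final:
  assumes "u permutes {1..n}" "c \<in> {1..n}"
  shows "vl_init n u n c = int n + 1 - int (inv u c)"
proof -
  have "inv u c \<in> {1..n}"
    using assms permutes_in_image[OF permutes_inv[OF assms(1)]] by simp
  then show ?thesis
    using vl_init_rank[OF assms(1) order_refl] permutes_inverses(1)[OF assms(1)] by metis
qed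

definition push_max :: "(nat \<Rightarrow> int) \<Rightarrow> nat \<Rightarrow> nat \<Rightarrow> int" where
  "push_max a n j = Max ((\<lambda>m. a m + int m - int j) ` {j..n})"

lemma push_max_last: "push_max a n n = a n"
  unfolding push_max_def by simp

lemma push_max_step:
  assumes "i < n"
  shows "push_max a n i = max (push_max a n (i + 1) + 1) (a i)"
proof -
  have split: "{i..n} = insert i {i + 1..n}" and ne: "{i + 1..n} \<noteq> {}"
    using assms by auto
  have "(\<lambda>m. a m + int m - int i) ` {i + 1..n} = (\<lambda>m. (a m + int m - int (i + 1)) + 1) ` {i + 1..n}"
    by auto
  then have "Max ((\<lambda>m. a m + int m - int i) ` {i + 1..n}) = push_max a n (i + 1) + 1"
    unfolding push_max_def using Max_add_commute[OF _ ne, of "\<lambda>m. a m + int m - int (i + 1)" 1]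
    by (simp del: of_nat_Suc)
  then show ?thesis
    unfolding push_max_def split using ne by (simp add: max.commute)
qed

lemma vl_proc_push_max:
  assumes "v permutes {1..n}" "k \<le> n - 1" "j \<in> {1..n}"
  shows "vl_proc n u v k (v j) =
    (if n - k \<le> j then push_max (\<lambda>m. vl_init n u n (v m)) n j else vl_init n u n (v j))"
  using assms(2,3)
proof (induction k arbitrary: j)
  case 0
  then show ?case by (auto simp: push_max_last)
next
  case (Suc k)
  define i where "i = n - Suc k"
  have i: "1 \<le> i" "i < n" "i + 1 = n - k"
    using Suc.prems by (auto simp: i_def)
  show ?case
  proof (cases "j = i")
    case True
    have "vl_proc n u v k (v (i + 1)) = push_max (\<lambda>m. vl_init n u n (v m)) n (i + 1)"
      and "vl_proc n u v k (v i) = vl_init n u n (v i)"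
      using Suc.IH[of "i + 1"] Suc.IH[of i] Suc.prems i by auto
    with True show ?thesis
      using push_max_step[OF i(2), of "\<lambda>m. vl_init n u n (v m)"]
      by (simp add: Let_def i_def[symmetric])
  next
    case False
    then have "v j \<noteq> v i"
      using permutes_inj[OF assms(1)] by (meson injD)
    then have "vl_proc n u v (Suc k) (v j) = vl_proc n u v k (v j)"
      by (simp add: Let_def i_def[symmetric])
    moreover have "(n - Suc k \<le> j) = (n - k \<le> j)"
      using False i by (auto simp: i_def)
    ultimately show ?thesis using Suc by simp
  qed
qed

lemma Max_perm_reindex:
  assumes "v permutes A"
  shows "(MAX i \<in> A. f (inv v i)) = (MAX m \<in> A. f m)"
proof -
  have "(\<lambda>i. f (inv v i)) ` A = (\<lambda>i. f (inv v i)) ` (v ` A)"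
    using permutes_image[OF assms] by simp
  then show ?thesis
    by (simp add: image_image permutes_inverses(2)[OF assms])
qed

theorem theorem1:
  fixes n :: nat and u v :: "nat \<Rightarrow> nat"
  assumes "n \<ge> 1" and "u permutes {1..n}" and "v permutes {1..n}"
  shows "rewrite_cost n u v =
    (MAX i \<in> {1..n}. int (inv v i) - int (inv u i))"
proof -
  have init: "vl_init n u n (v m) = int n + 1 - int (inv u (v m))" if "m \<in> {1..n}" for m
    using vl_init_final[OF assms(2)] permutes_in_image[OF assms(3)] that by simp
  have "vl_proc n u v (n - 1) (v 1) = push_max (\<lambda>m. vl_init n u n (v m)) n 1"
    using vl_proc_push_max[OF assms(3), of "n - 1" 1] assms(1) by auto
  also have "\<dots> = (MAX m \<in> {1..n}. (int m - int (inv u (v m))) + int n)"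
    unfolding push_max_def by (intro arg_cong[where f = Max] image_cong) (auto simp: init)
  also have "\<dots> = (MAX m \<in> {1..n}. int m - int (inv u (v m))) + int n"
    using Max_add_commute[of "{1..n}" "\<lambda>m. int m - int (inv u (v m))" "int n"] assms(1) by simp
  also have "(MAX m \<in> {1..n}. int m - int (inv u (v m))) = (MAX i \<in> {1..n}. int (inv v i) - int (inv u i))"
    using Max_perm_reindex[OF assms(3), of "\<lambda>m. int m - int (inv u (v m))"]
    by (simp add: permutes_inverses(1)[OF assms(3)])
  finally show ?thesis
    unfolding rewrite_cost_def by simp
qed

end
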